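(* Let $(X,\sigma,\tau)$ be a separable, chronologically dense Lorentzian metric space satisfying the S-property, with c-completion $\overline X$. If $a,b,c\in\overline X$ satisfy $a\,\overline{\ll}\,b\,\overline{\ll}\,c$, then $\overline{\tau}(a,c)\geq\overline{\tau}(a,b)+\overline{\tau}(b,c)$.
   Context: A Lorentzian metric space $(X,\sigma,\tau)$ is a topological space with $\tau:X\times X\to[0,\infty]$ lower semicontinuous and satisfying $\tau(x,z)\geq\tau(x,y)+\tau(y,z)$ whenever $\tau(x,y),\tau(y,z)>0$. Write $x\ll y$ iff $\tau(x,y)>0$, $I^+(x)=\{y:x\ll y\}$, $I^-(x)=\{y:y\ll x\}$, $I^\pm[A]=\bigcup_{a\in A}I^\pm(a)$. Future (resp. past) chain: $x_n\ll x_{n+1}$ (resp. $x_{n+1}\ll x_n$) for all $n$. Separable: there is a countable $S$ with $x\ll y\Rightarrow\exists s\in S$, $x\ll s\ll y$. Chronologically dense: every $x$ with $I^-(x)\neq\emptyset$ (resp. $I^+(x)\neq\emptyset$) is the $\sigma$-limit of a future (resp. past) chain. Past set: $P=I^-[P]$; $\downarrow S=I^-[\{p:p\ll q\ \forall q\in S\}]$; IP: past set not the union of two proper past subsets; PIP: IP of the form $I^-(p)$; future sets, $\uparrow S$, IF, PIF dually. For nonempty IP $P$ and IF $F$, $P\sim_S F$ iff $P$ is a maximal IP in $\downarrow F$ and $F$ a maximal IF in $\uparrow P$; $P\sim_S\emptyset$ (resp. $\emptyset\sim_S F$) if the nonempty $P$ (resp. $F$) is S-related to no nonempty IF (resp.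 IP). S-property: for every $x$, $I^-(x)\sim_S I^+(x)$, and no PIF other than $I^+(x)$ (resp. PIP other than $I^-(x)$) is S-related to $I^-(x)$ (resp. $I^+(x)$). c-completion $\overline X=\{(P,F):P\sim_S F\}$. $\overline\tau((P,F),(P',F'))=0$ if $F=\emptyset$ or $P'=\emptyset$, and otherwise $\lim_n\tau(q_n,p'_n)$ for any past chain $\{q_n\}$ with $I^+[\{q_n\}]=F$ and future chain $\{p'_n\}$ with $I^-[\{p'_n\}]=P'$ (well defined). $a\,\overline\ll\,b$ iff $\overline\tau(a,b)>0$. *)

theory Defs
  imports Complex_Main "HOL-Library.Extended_Nonnegative_Real"
begin

definition tau_lsc :: "('a::topological_space \<Rightarrow> 'a \<Rightarrow> ennreal) \<Rightarrow> bool" where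
  "tau_lsc \<tau> \<longleftrightarrow> (\<forall>x y. \<forall>r < \<tau> x y. \<forall>\<^sub>F p in nhds (x, y). r < \<tau> (fst p) (snd p))"

definition lorentzian_metric_space :: "('a::topological_space \<Rightarrow> 'a \<Rightarrow> ennreal) \<Rightarrow> bool" where
  "lorentzian_metric_space \<tau> \<longleftrightarrow> tau_lsc \<tau> \<and>
     (\<forall>x y z. \<tau> x y > 0 \<and> \<tau> y z > 0 \<longrightarrow> \<tau> x z \<ge> \<tau> x y + \<tau> y z)"

definition chron :: "('a \<Rightarrow> 'a \<Rightarrow> ennreal) \<Rightarrow> 'a \<Rightarrow> 'a \<Rightarrow> bool" where
  "chron \<tau> x y \<longleftrightarrow> \<tau> x y > 0"

definition Ifut :: "('a \<Rightarrow> 'a \<Rightarrow> ennreal) \<Rightarrow> 'a \<Rightarrow> 'a set" where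
  "Ifut \<tau> x = {y. chron \<tau> x y}"

definition Ipast :: "('a \<Rightarrow> 'a \<Rightarrow> ennreal) \<Rightarrow> 'a \<Rightarrow> 'a set" where
  "Ipast \<tau> x = {y. chron \<tau> y x}"

definition IfutS :: "('a \<Rightarrow> 'a \<Rightarrow> ennreal) \<Rightarrow> 'a set \<Rightarrow> 'a set" where
  "IfutS \<tau> A = (\<Union>a\<in>A. Ifut \<tau> a)"

definition IpastS :: "('a \<Rightarrow> 'a \<Rightarrow> ennreal) \<Rightarrow> 'a set \<Rightarrow> 'a set" where
  "IpastS \<tau> A = (\<Union>a\<in>A. Ipast \<tau> a)"

definition future_chain :: "('a \<Rightarrow> 'a \<Rightarrow> ennreal) \<Rightarrow> (nat \<Rightarrow> 'a) \<Rightarrow> bool" where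
  "future_chain \<tau> x \<longleftrightarrow> (\<forall>n. chron \<tau> (x n) (x (Suc n)))"

definition past_chain :: "('a \<Rightarrow> 'a \<Rightarrow> ennreal) \<Rightarrow> (nat \<Rightarrow> 'a) \<Rightarrow> bool" where
  "past_chain \<tau> x \<longleftrightarrow> (\<forall>n. chron \<tau> (x (Suc n)) (x n))"

definition separable_lms :: "('a \<Rightarrow> 'a \<Rightarrow> ennreal) \<Rightarrow> bool" where
  "separable_lms \<tau> \<longleftrightarrow> (\<exists>S. countable S \<and>
     (\<forall>x y. chron \<tau> x y \<longrightarrow> (\<exists>s\<in>S. chron \<tau> x s \<and> chron \<tau> s y)))"

definition chron_dense :: "('a::topological_space \<Rightarrow> 'a \<Rightarrow> ennreal) \<Rightarrow> bool" where
  "chron_dense \<tau> \<longleftrightarrow>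
     (\<forall>x. Ipast \<tau> x \<noteq> {} \<longrightarrow> (\<exists>s. future_chain \<tau> s \<and> s \<longlonglongrightarrow> x)) \<and>
     (\<forall>x. Ifut \<tau> x \<noteq> {} \<longrightarrow> (\<exists>s. past_chain \<tau> s \<and> s \<longlonglongrightarrow> x))"

definition past_set :: "('a \<Rightarrow> 'a \<Rightarrow> ennreal) \<Rightarrow> 'a set \<Rightarrow> bool" where
  "past_set \<tau> P \<longleftrightarrow> P = IpastS \<tau> P"

definition future_set :: "('a \<Rightarrow> 'a \<Rightarrow> ennreal) \<Rightarrow> 'a set \<Rightarrow> bool" where
  "future_set \<tau> F \<longleftrightarrow> F = IfutS \<tau> F"

definition down :: "('a \<Rightarrow> 'a \<Rightarrow> ennreal) \<Rightarrow> 'a set \<Rightarrow> 'a set" where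
  "down \<tau> S = IpastS \<tau> {p. \<forall>q\<in>S. chron \<tau> p q}"

definition up :: "('a \<Rightarrow> 'a \<Rightarrow> ennreal) \<Rightarrow> 'a set \<Rightarrow> 'a set" where
  "up \<tau> S = IfutS \<tau> {p. \<forall>q\<in>S. chron \<tau> q p}"

definition IP :: "('a \<Rightarrow> 'a \<Rightarrow> ennreal) \<Rightarrow> 'a set \<Rightarrow> bool" where
  "IP \<tau> P \<longleftrightarrow> past_set \<tau> P \<and>
     \<not> (\<exists>P1 P2. past_set \<tau> P1 \<and> past_set \<tau> P2 \<and> P1 \<subset> P \<and> P2 \<subset> P \<and> P = P1 \<union> P2)"

definition IF :: "('a \<Rightarrow> 'a \<Rightarrow> ennreal) \<Rightarrow> 'a set \<Rightarrow> bool" where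
  "IF \<tau> F \<longleftrightarrow> future_set \<tau> F \<and>
     \<not> (\<exists>F1 F2. future_set \<tau> F1 \<and> future_set \<tau> F2 \<and> F1 \<subset> F \<and> F2 \<subset> F \<and> F = F1 \<union> F2)"

definition maximal_IP_in :: "('a \<Rightarrow> 'a \<Rightarrow> ennreal) \<Rightarrow> 'a set \<Rightarrow> 'a set \<Rightarrow> bool" where
  "maximal_IP_in \<tau> P A \<longleftrightarrow> IP \<tau> P \<and> P \<subseteq> A \<and>
     (\<forall>P'. IP \<tau> P' \<and> P \<subseteq> P' \<and> P' \<subseteq> A \<longrightarrow> P' = P)"

definition maximal_IF_in :: "('a \<Rightarrow> 'a \<Rightarrow> ennreal) \<Rightarrow> 'a set \<Rightarrow> 'a set \<Rightarrow> bool" where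
  "maximal_IF_in \<tau> F A \<longleftrightarrow> IF \<tau> F \<and> F \<subseteq> A \<and>
     (\<forall>F'. IF \<tau> F' \<and> F \<subseteq> F' \<and> F' \<subseteq> A \<longrightarrow> F' = F)"

definition S_rel_ne :: "('a \<Rightarrow> 'a \<Rightarrow> ennreal) \<Rightarrow> 'a set \<Rightarrow> 'a set \<Rightarrow> bool" where
  "S_rel_ne \<tau> P F \<longleftrightarrow> P \<noteq> {} \<and> F \<noteq> {} \<and> IP \<tau> P \<and> IF \<tau> F \<and>
     maximal_IP_in \<tau> P (down \<tau> F) \<and> maximal_IF_in \<tau> F (up \<tau> P)"

definition S_rel :: "('a \<Rightarrow> 'a \<Rightarrow> ennreal) \<Rightarrow> 'a set \<Rightarrow> 'a set \<Rightarrow> bool" where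
  "S_rel \<tau> P F \<longleftrightarrow>
     (if P \<noteq> {} \<and> F \<noteq> {} then S_rel_ne \<tau> P F
      else if P \<noteq> {} \<and> F = {} then IP \<tau> P \<and> (\<forall>F'. \<not> S_rel_ne \<tau> P F')
      else if P = {} \<and> F \<noteq> {} then IF \<tau> F \<and> (\<forall>P'. \<not> S_rel_ne \<tau> P' F)
      else False)"

definition S_property :: "('a \<Rightarrow> 'a \<Rightarrow> ennreal) \<Rightarrow> bool" where
  "S_property \<tau> \<longleftrightarrow> (\<forall>x. S_rel \<tau> (Ipast \<tau> x) (Ifut \<tau> x) \<and>
     (\<forall>y. IF \<tau> (Ifut \<tau> y) \<and> S_rel \<tau> (Ipast \<tau> x) (Ifut \<tau> y) \<longrightarrow> Ifut \<tau> y = Ifut \<tau> x) \<and>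
     (\<forall>y. IP \<tau> (Ipast \<tau> y) \<and> S_rel \<tau> (Ipast \<tau> y) (Ifut \<tau> x) \<longrightarrow> Ipast \<tau> y = Ipast \<tau> x))"

definition c_completion :: "('a \<Rightarrow> 'a \<Rightarrow> ennreal) \<Rightarrow> ('a set \<times> 'a set) set" where
  "c_completion \<tau> = {(P, F). S_rel \<tau> P F}"

text \<open>Extended time separation on the c-completion: the common limit of
  tau(q_n, p'_n) over all past chains q generating F and future chains p' generating P'
  (well defined by the paper).\<close>
definition tau_bar :: "('a \<Rightarrow> 'a \<Rightarrow> ennreal) \<Rightarrow> ('a set \<times> 'a set) \<Rightarrow> ('a set \<times> 'a set) \<Rightarrow> ennreal" where
  "tau_bar \<tau> a b =
     (if snd a = {} \<or> fst b = {} then 0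
      else (THE L. \<forall>q p. past_chain \<tau> q \<and> IfutS \<tau> (range q) = snd a \<and>
                          future_chain \<tau> p \<and> IpastS \<tau> (range p) = fst b \<longrightarrow>
                          (\<lambda>n. \<tau> (q n) (p n)) \<longlonglongrightarrow> L))"

end

theory Submission
  imports Defs
begin

text \<open>Choose a past chain \<open>q\<close> generating the future component of \<open>a\<close>, a past chain
  \<open>q'\<close> generating that of \<open>b\<close>, and future chains \<open>p'\<close>, \<open>p''\<close> generating the past
  components of \<open>b\<close> and \<open>c\<close>. Since the past component of \<open>b\<close> lies in the common past of
  its future component, \<open>p' n \<ll> q' n\<close>, and the reverse triangle inequality gives
  \<open>\<tau>(q n, p' n) + \<tau>(q' n, p'' n) \<le> \<tau>(q n, p'' n)\<close> as soon as both summands are positive;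
  the theorem follows in the limit. The limits defining \<open>\<tau>\<close>-bar exist and do not depend on
  the chains, because \<open>\<tau>(q n, p n)\<close> increases along chains and the suprema for two pairs of
  chains generating the same sets dominate each other. Separability alone provides generating
  chains for every indecomposable past or future set.\<close>

lemma lorentzian_reverse_triangle:
  assumes "lorentzian_metric_space \<tau>" "\<tau> x y > 0" "\<tau> y z > 0"
  shows "\<tau> x y + \<tau> y z \<le> \<tau> x z"
  using assms unfolding lorentzian_metric_space_def by blast

lemma tau_le_chron_left:
  assumes "lorentzian_metric_space \<tau>" "chron \<tau> x' x"
  shows "\<tau> x y \<le> \<tau> x' y"
proof (cases "\<tau> x y > 0")
  case True
  then have "\<tau> x' x + \<tau> x y \<le> \<tau> x' y"
    using assms lorentzian_reverse_triangle unfolding chron_def by blast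
  then show ?thesis
    by (meson add_increasing order_trans order_refl zero_le)
qed simp

lemma tau_le_chron_right:
  assumes "lorentzian_metric_space \<tau>" "chron \<tau> y y'"
  shows "\<tau> x y \<le> \<tau> x y'"
proof (cases "\<tau> x y > 0")
  case True
  then have "\<tau> x y + \<tau> y y' \<le> \<tau> x y'"
    using assms lorentzian_reverse_triangle unfolding chron_def by blast
  then show ?thesis
    by (meson add_increasing2 order_trans order_refl zero_le)
qed simp

lemma lorentzian_transp_chron:
  assumes "lorentzian_metric_space \<tau>"
  shows "transp (chron \<tau>)"
proof (rule transpI)
  fix x y z
  assume "chron \<tau> x y" "chron \<tau> y z"
  then show "chron \<tau> x z"
    using tau_le_chron_right[OF assms] unfolding chron_def by (meson less_le_trans)
qed

lemma tau_add_le_across_chron: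
  assumes L: "lorentzian_metric_space \<tau>"
    and "\<tau> x y > 0" "chron \<tau> y y'" "\<tau> y' z > 0"
  shows "\<tau> x y + \<tau> y' z \<le> \<tau> x z"
proof -
  have "\<tau> x y \<le> \<tau> x y'"
    using tau_le_chron_right[OF L \<open>chron \<tau> y y'\<close>] .
  then have "\<tau> x y + \<tau> y' z \<le> \<tau> x y' + \<tau> y' z"
    by (rule add_right_mono)
  also have "\<dots> \<le> \<tau> x z"
    using \<open>\<tau> x y \<le> \<tau> x y'\<close> assms by (intro lorentzian_reverse_triangle) auto
  finally show ?thesis .
qed

definition chron_interpolating :: "('a \<Rightarrow> 'a \<Rightarrow> ennreal) \<Rightarrow> bool" where
  "chron_interpolating \<tau> \<longleftrightarrow> (\<forall>x y. chron \<tau> x y \<longrightarrow> (\<exists>s. chron \<tau> x s \<and> chron \<tau> s y))"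

lemma separable_lms_chron_interpolating: "separable_lms \<tau> \<Longrightarrow> chron_interpolating \<tau>"
  unfolding separable_lms_def chron_interpolating_def by blast

lemma past_set_IpastS:
  assumes tr: "transp (chron \<tau>)" and ip: "chron_interpolating \<tau>"
  shows "past_set \<tau> (IpastS \<tau> A)"
  unfolding past_set_def
proof
  show "IpastS \<tau> A \<subseteq> IpastS \<tau> (IpastS \<tau> A)"
    using ip unfolding chron_interpolating_def IpastS_def Ipast_def by blast
  show "IpastS \<tau> (IpastS \<tau> A) \<subseteq> IpastS \<tau> A"
    using transpD[OF tr] unfolding IpastS_def Ipast_def by blast
qed

lemma IpastS_subset_past_set: "past_set \<tau> P \<Longrightarrow> A \<subseteq> P \<Longrightarrow> IpastS \<tau> A \<subseteq> P"
  unfolding past_set_def IpastS_def by blast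

lemma past_set_below: "past_set \<tau> P \<Longrightarrow> w \<in> P \<Longrightarrow> \<exists>r\<in>P. chron \<tau> w r"
  unfolding past_set_def by (metis IpastS_def Ipast_def UN_iff mem_Collect_eq)

lemma past_set_downward_closed: "past_set \<tau> P \<Longrightarrow> r \<in> P \<Longrightarrow> chron \<tau> w r \<Longrightarrow> w \<in> P"
  unfolding past_set_def by (metis IpastS_def Ipast_def UN_iff mem_Collect_eq)

lemma IP_directed:
  assumes tr: "transp (chron \<tau>)" and ip: "chron_interpolating \<tau>"
    and P: "IP \<tau> P" and "x \<in> P" "y \<in> P"
  shows "\<exists>z\<in>P. chron \<tau> x z \<and> chron \<tau> y z"
proof -
  have ps: "past_set \<tau> P" using P unfolding IP_def by blast
  note below = past_set_below[OF ps]
  \<comment> \<open>Irreducibility of \<open>P = P1 \<union> P2\<close> forces \<open>P1 = P\<close>, since \<open>P2 = P\<close> is impossible.\<close>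
  define P1 where "P1 = IpastS \<tau> (Ifut \<tau> x \<inter> P)"
  define P2 where "P2 = IpastS \<tau> (P - P1)"
  have sub: "P1 \<subseteq> P" "P2 \<subseteq> P"
    unfolding P1_def P2_def by (auto intro!: IpastS_subset_past_set[OF ps])
  have "P \<subseteq> P1 \<union> P2"
  proof
    fix w assume "w \<in> P"
    then obtain r where r: "r \<in> P" "chron \<tau> w r" using below by blast
    show "w \<in> P1 \<union> P2"
    proof (cases "r \<in> P1")
      case True
      then show ?thesis
        using r transpD[OF tr] unfolding P1_def IpastS_def Ipast_def by blast
    next
      case False
      then show ?thesis using r unfolding P2_def IpastS_def Ipast_def by blast
    qed
  qed
  then have "P = P1 \<union> P2" using sub by blast
  moreover have "past_set \<tau> P1" "past_set \<tau> P2"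
    unfolding P1_def P2_def using past_set_IpastS[OF tr ip] by blast+
  ultimately have "P1 = P \<or> P2 = P" using P sub unfolding IP_def by blast
  then show ?thesis
  proof
    assume "P1 = P"
    then show ?thesis
      using \<open>y \<in> P\<close> unfolding P1_def IpastS_def Ipast_def Ifut_def by blast
  next
    assume "P2 = P"
    then obtain r where r: "r \<in> P" "r \<notin> P1" "chron \<tau> x r"
      using \<open>x \<in> P\<close> unfolding P2_def IpastS_def Ipast_def by blast
    then obtain r' where "r' \<in> P" "chron \<tau> r r'" using below by blast
    then have "r \<in> P1"
      using r transpD[OF tr] unfolding P1_def IpastS_def Ipast_def Ifut_def by blast
    with r show ?thesis by blast
  qed
qed

lemma IP_eq_IpastS_future_chain:
  assumes tr: "transp (chron \<tau>)" and sep: "separable_lms \<tau>"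
    and P: "IP \<tau> P" "P \<noteq> {}"
  obtains p where "future_chain \<tau> p" "IpastS \<tau> (range p) = P"
proof -
  obtain S where S: "countable S" "\<And>x y. chron \<tau> x y \<Longrightarrow> \<exists>s\<in>S. chron \<tau> x s \<and> chron \<tau> s y"
    using sep unfolding separable_lms_def by blast
  have ps: "past_set \<tau> P" using P unfolding IP_def by blast
  have directed: "\<exists>z\<in>P. chron \<tau> x z \<and> chron \<tau> y z" if "x \<in> P" "y \<in> P" for x y
    using IP_directed[OF tr separable_lms_chron_interpolating[OF sep] P(1) that] .
  have cofinal: "\<exists>s\<in>S \<inter> P. chron \<tau> w s" if "w \<in> P" for w
  proof -
    obtain r where "r \<in> P" "chron \<tau> w r" using past_set_below[OF ps \<open>w \<in> P\<close>] by blast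
    then obtain s where "s \<in> S" "chron \<tau> w s" "chron \<tau> s r" using S(2) by blast
    with \<open>r \<in> P\<close> show ?thesis using past_set_downward_closed[OF ps] by blast
  qed
  define e where "e = from_nat_into (S \<inter> P)"
  have "S \<inter> P \<noteq> {}" using cofinal P(2) by blast
  then have e: "range e = S \<inter> P" unfolding e_def using S(1) by simp
  have "\<exists>p. \<forall>n. (p n \<in> P \<and> chron \<tau> (e n) (p n)) \<and> chron \<tau> (p n) (p (Suc n))"
  proof (rule dependent_nat_choice)
    show "\<exists>z. z \<in> P \<and> chron \<tau> (e 0) z"
      using directed[of "e 0" "e 0"] e by blast
    fix z n assume "z \<in> P \<and> chron \<tau> (e n) z"
    then show "\<exists>z'. (z' \<in> P \<and> chron \<tau> (e (Suc n)) z') \<and> chron \<tau> z z'"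
      using directed[of z "e (Suc n)"] e by blast
  qed
  then obtain p where p: "\<And>n. p n \<in> P" "\<And>n. chron \<tau> (e n) (p n)"
    and chain: "future_chain \<tau> p"
    unfolding future_chain_def by blast
  have "IpastS \<tau> (range p) = P"
  proof
    show "IpastS \<tau> (range p) \<subseteq> P"
      using p(1) by (intro IpastS_subset_past_set[OF ps]) auto
    show "P \<subseteq> IpastS \<tau> (range p)"
    proof
      fix w assume "w \<in> P"
      then obtain n where "chron \<tau> w (e n)" using cofinal e by (metis rangeE)
      then have "chron \<tau> w (p n)" using transpD[OF tr] p(2) by blast
      then show "w \<in> IpastS \<tau> (range p)" unfolding IpastS_def Ipast_def by blast
    qed
  qed
  with chain that show thesis by blast
qed

definition time_reversal :: "('a \<Rightarrow> 'a \<Rightarrow> ennreal) \<Rightarrow> 'a \<Rightarrow> 'a \<Rightarrow> ennreal" where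
  "time_reversal \<tau> x y = \<tau> y x"

lemma chron_time_reversal: "chron (time_reversal \<tau>) = (chron \<tau>)\<inverse>\<inverse>"
  unfolding chron_def time_reversal_def by auto

lemma IpastS_time_reversal: "IpastS (time_reversal \<tau>) A = IfutS \<tau> A"
  unfolding IpastS_def IfutS_def Ipast_def Ifut_def chron_time_reversal by simp

lemma past_set_time_reversal: "past_set (time_reversal \<tau>) A = future_set \<tau> A"
  unfolding past_set_def future_set_def IpastS_time_reversal ..

lemma IP_time_reversal: "IP (time_reversal \<tau>) F = IF \<tau> F"
  unfolding IP_def IF_def past_set_time_reversal ..

lemma separable_lms_time_reversal:
  assumes "separable_lms \<tau>"
  shows "separable_lms (time_reversal \<tau>)"
proof -
  obtain S where "countable S" "\<forall>x y. chron \<tau> x y \<longrightarrow> (\<exists>s\<in>S. chron \<tau> x s \<and> chron \<tau> s y)"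
    using assms unfolding separable_lms_def by blast
  then show ?thesis
    unfolding separable_lms_def chron_time_reversal conversep_iff by (intro exI[of _ S]) blast
qed

lemma future_chain_time_reversal: "future_chain (time_reversal \<tau>) q = past_chain \<tau> q"
  unfolding future_chain_def past_chain_def chron_time_reversal conversep_iff ..

lemma IF_eq_IfutS_past_chain:
  assumes "transp (chron \<tau>)" "separable_lms \<tau>" "IF \<tau> F" "F \<noteq> {}"
  obtains q where "past_chain \<tau> q" "IfutS \<tau> (range q) = F"
proof -
  have "transp (chron (time_reversal \<tau>))" "separable_lms (time_reversal \<tau>)"
    "IP (time_reversal \<tau>) F"
    using assms by (simp_all add: chron_time_reversal separable_lms_time_reversal IP_time_reversal)
  then obtain q where "future_chain (time_reversal \<tau>) q" "IpastS (time_reversal \<tau>) (range q) = F"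
    using IP_eq_IpastS_future_chain assms(4) by blast
  then show thesis
    using that unfolding future_chain_time_reversal IpastS_time_reversal by blast
qed

lemma past_chain_chron:
  assumes "transp (chron \<tau>)" "past_chain \<tau> q" "m < n"
  shows "chron \<tau> (q n) (q m)"
  using \<open>m < n\<close>
proof (induction m n rule: less_Suc_induct)
  case (1 i)
  show ?case using assms(2) unfolding past_chain_def by blast
next
  case (2 i j k)
  then show ?case using transpD[OF assms(1)] by blast
qed

lemma future_chain_chron:
  assumes "transp (chron \<tau>)" "future_chain \<tau> p" "m < n"
  shows "chron \<tau> (p m) (p n)"
  using \<open>m < n\<close>
proof (induction m n rule: less_Suc_induct)
  case (1 i)
  show ?case using assms(2) unfolding future_chain_def by blast
next
  case (2 i j k)
  then show ?case using transpD[OF assms(1)] by blast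
qed

lemma past_chain_mem_IfutS: "past_chain \<tau> q \<Longrightarrow> q m \<in> IfutS \<tau> (range q)"
  unfolding past_chain_def IfutS_def Ifut_def by blast

lemma future_chain_mem_IpastS: "future_chain \<tau> p \<Longrightarrow> p m \<in> IpastS \<tau> (range p)"
  unfolding future_chain_def IpastS_def Ipast_def by blast

lemma incseq_tau_chains:
  assumes L: "lorentzian_metric_space \<tau>" and "past_chain \<tau> q" "future_chain \<tau> p"
  shows "incseq (\<lambda>n. \<tau> (q n) (p n))"
proof (rule incseq_SucI)
  fix n
  have "\<tau> (q n) (p n) \<le> \<tau> (q (Suc n)) (p n)"
    using assms(2) by (intro tau_le_chron_left[OF L]) (simp add: past_chain_def)
  also have "\<dots> \<le> \<tau> (q (Suc n)) (p (Suc n))"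
    using assms(3) by (intro tau_le_chron_right[OF L]) (simp add: future_chain_def)
  finally show "\<tau> (q n) (p n) \<le> \<tau> (q (Suc n)) (p (Suc n))" .
qed

lemma tau_chains_le_SUP:
  assumes L: "lorentzian_metric_space \<tau>"
    and q: "past_chain \<tau> q" and p: "future_chain \<tau> p"
    and q': "past_chain \<tau> q'" and p': "future_chain \<tau> p'"
    and "IfutS \<tau> (range q') \<subseteq> IfutS \<tau> (range q)"
    and "IpastS \<tau> (range p') \<subseteq> IpastS \<tau> (range p)"
  shows "\<tau> (q' m) (p' m) \<le> (SUP n. \<tau> (q n) (p n))"
proof -
  have tr: "transp (chron \<tau>)" using lorentzian_transp_chron[OF L] .
  obtain k where k: "chron \<tau> (q k) (q' m)"
    using past_chain_mem_IfutS[OF q'] assms(6) unfolding IfutS_def Ifut_def by blast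
  obtain j where j: "chron \<tau> (p' m) (p j)"
    using future_chain_mem_IpastS[OF p'] assms(7) unfolding IpastS_def Ipast_def by blast
  define N where "N = Suc (k + j)"
  have "chron \<tau> (q N) (q' m)"
    using transpD[OF tr past_chain_chron[OF tr q] k] N_def by simp
  moreover have "chron \<tau> (p' m) (p N)"
    using transpD[OF tr j future_chain_chron[OF tr p]] N_def by simp
  ultimately have "\<tau> (q' m) (p' m) \<le> \<tau> (q N) (p N)"
    using tau_le_chron_left[OF L] tau_le_chron_right[OF L] order_trans by metis
  then show ?thesis by (meson SUP_upper2 UNIV_I)
qed

lemma tau_bar_LIMSEQ:
  assumes L: "lorentzian_metric_space \<tau>"
    and q: "past_chain \<tau> q" "IfutS \<tau> (range q) = snd a"
    and p: "future_chain \<tau> p" "IpastS \<tau> (range p) = fst b"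
  shows "(\<lambda>n. \<tau> (q n) (p n)) \<longlonglongrightarrow> tau_bar \<tau> a b"
proof -
  define lim where "lim = (SUP n. \<tau> (q n) (p n))"
  have generating: "(\<lambda>n. \<tau> (q' n) (p' n)) \<longlonglongrightarrow> lim"
    if q': "past_chain \<tau> q'" "IfutS \<tau> (range q') = snd a"
      and p': "future_chain \<tau> p'" "IpastS \<tau> (range p') = fst b" for q' p'
  proof -
    have "(SUP n. \<tau> (q' n) (p' n)) \<le> lim"
      unfolding lim_def using q p q' p'
      by (intro SUP_least tau_chains_le_SUP[OF L q(1) p(1) q'(1) p'(1)]) simp_all
    moreover have "lim \<le> (SUP n. \<tau> (q' n) (p' n))"
      unfolding lim_def using q p q' p'
      by (intro SUP_least tau_chains_le_SUP[OF L q'(1) p'(1) q(1) p(1)]) simp_all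
    ultimately have "(SUP n. \<tau> (q' n) (p' n)) = lim" by (rule antisym)
    then show ?thesis using LIMSEQ_SUP[OF incseq_tau_chains[OF L q'(1) p'(1)]] by simp
  qed
  define limit_of_chains where "limit_of_chains = (\<lambda>L. \<forall>q p. past_chain \<tau> q \<and>
    IfutS \<tau> (range q) = snd a \<and> future_chain \<tau> p \<and> IpastS \<tau> (range p) = fst b \<longrightarrow>
    (\<lambda>n. \<tau> (q n) (p n)) \<longlonglongrightarrow> L)"
  have "(THE L. limit_of_chains L) = lim"
  proof (rule the_equality)
    show "limit_of_chains lim" unfolding limit_of_chains_def using generating by blast
    fix L assume "limit_of_chains L"
    then have "(\<lambda>n. \<tau> (q n) (p n)) \<longlonglongrightarrow> L" unfolding limit_of_chains_def using q p by blast
    then show "L = lim" using generating[OF q p] by (rule LIMSEQ_unique)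
  qed
  moreover have "snd a \<noteq> {}" "fst b \<noteq> {}"
    using past_chain_mem_IfutS[OF q(1)] future_chain_mem_IpastS[OF p(1)] q(2) p(2) by auto
  ultimately have "tau_bar \<tau> a b = lim" unfolding tau_bar_def limit_of_chains_def by simp
  then show ?thesis using generating[OF q p] by simp
qed

lemma S_rel_chron:
  assumes tr: "transp (chron \<tau>)" and "S_rel \<tau> P F" "x \<in> P" "y \<in> F"
  shows "chron \<tau> x y"
proof -
  have "P \<subseteq> down \<tau> F"
    using assms unfolding S_rel_def S_rel_ne_def maximal_IP_in_def by (auto split: if_splits)
  then obtain r where "chron \<tau> x r" "\<forall>z\<in>F. chron \<tau> r z"
    using \<open>x \<in> P\<close> unfolding down_def IpastS_def Ipast_def by blast
  then show ?thesis using \<open>y \<in> F\<close> transpD[OF tr] by blast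
qed

lemma c_completion_past_chain:
  assumes "transp (chron \<tau>)" "separable_lms \<tau>" "a \<in> c_completion \<tau>" "snd a \<noteq> {}"
  obtains q where "past_chain \<tau> q" "IfutS \<tau> (range q) = snd a"
proof -
  have "IF \<tau> (snd a)"
    using assms(3,4) unfolding c_completion_def S_rel_def S_rel_ne_def by (auto split: if_splits)
  then show thesis using IF_eq_IfutS_past_chain assms that by blast
qed

lemma c_completion_future_chain:
  assumes "transp (chron \<tau>)" "separable_lms \<tau>" "a \<in> c_completion \<tau>" "fst a \<noteq> {}"
  obtains p where "future_chain \<tau> p" "IpastS \<tau> (range p) = fst a"
proof -
  have "IP \<tau> (fst a)"
    using assms(3,4) unfolding c_completion_def S_rel_def S_rel_ne_def by (auto split: if_splits)
  then show thesis using IP_eq_IpastS_future_chain assms that by blast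
qed

lemma tau_bar_pos_nonempty: "tau_bar \<tau> a b > 0 \<Longrightarrow> snd a \<noteq> {} \<and> fst b \<noteq> {}"
  unfolding tau_bar_def by (auto split: if_splits)

theorem mainTheorem17:
  fixes \<tau> :: "'a::topological_space \<Rightarrow> 'a \<Rightarrow> ennreal"
  assumes "lorentzian_metric_space \<tau>"
    and "separable_lms \<tau>"
    and "chron_dense \<tau>"
    and "S_property \<tau>"
    and "a \<in> c_completion \<tau>" and "b \<in> c_completion \<tau>" and "c \<in> c_completion \<tau>"
    and "tau_bar \<tau> a b > 0" and "tau_bar \<tau> b c > 0"
  shows "tau_bar \<tau> a c \<ge> tau_bar \<tau> a b + tau_bar \<tau> b c"
proof -
  note L = assms(1)
  have tr: "transp (chron \<tau>)" using lorentzian_transp_chron[OF L] .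
  have ne: "snd a \<noteq> {}" "fst b \<noteq> {}" "snd b \<noteq> {}" "fst c \<noteq> {}"
    using tau_bar_pos_nonempty assms(8,9) by blast+
  obtain q where q: "past_chain \<tau> q" "IfutS \<tau> (range q) = snd a"
    using c_completion_past_chain[OF tr assms(2,5) ne(1)] .
  obtain q' where q': "past_chain \<tau> q'" "IfutS \<tau> (range q') = snd b"
    using c_completion_past_chain[OF tr assms(2,6) ne(3)] .
  obtain p' where p': "future_chain \<tau> p'" "IpastS \<tau> (range p') = fst b"
    using c_completion_future_chain[OF tr assms(2,6) ne(2)] .
  obtain p'' where p'': "future_chain \<tau> p''" "IpastS \<tau> (range p'') = fst c"
    using c_completion_future_chain[OF tr assms(2,7) ne(4)] .
  have ab: "(\<lambda>n. \<tau> (q n) (p' n)) \<longlonglongrightarrow> tau_bar \<tau> a b" using tau_bar_LIMSEQ[OF L q p'] .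
  have bc: "(\<lambda>n. \<tau> (q' n) (p'' n)) \<longlonglongrightarrow> tau_bar \<tau> b c" using tau_bar_LIMSEQ[OF L q' p''] .
  have ac: "(\<lambda>n. \<tau> (q n) (p'' n)) \<longlonglongrightarrow> tau_bar \<tau> a c" using tau_bar_LIMSEQ[OF L q p''] .
  have between: "chron \<tau> (p' n) (q' n)" for n
    using S_rel_chron[OF tr] assms(6) future_chain_mem_IpastS[OF p'(1)] past_chain_mem_IfutS[OF q'(1)]
      p'(2) q'(2) unfolding c_completion_def by auto
  have "\<forall>\<^sub>F n in sequentially. \<tau> (q n) (p' n) + \<tau> (q' n) (p'' n) \<le> \<tau> (q n) (p'' n)"
    using order_tendstoD(1)[OF ab assms(8)] order_tendstoD(1)[OF bc assms(9)]
    by eventually_elim (rule tau_add_le_across_chron[OF L _ between])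
  then show ?thesis by (intro tendsto_le[OF _ ac tendsto_add[OF ab bc]]) simp
qed

end
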